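(* Let $m\ge 2$, $R>0$, $h\in C^2([0,\infty))$ with $h'(r)\ge 0$, and let $B(R)$ be the ball of radius $R$ centered at the origin. If $\alpha\ge -\sigma_1(B(R);\gamma_h)$, then $\lambda_{2,\alpha}(B(R);\gamma_h)\ge 0$.
   Context: $d\gamma_h=e^{h(|x|)}dx$. $\lambda_{2,\alpha}(B(R);\gamma_h)$ is the second eigenvalue (counted with multiplicity) of the Robin problem $-\operatorname{div}(e^{h(|x|)}\nabla u)=\lambda e^{h(|x|)}u$ in $B(R)$, $\partial u/\partial\nu+\alpha u=0$ on $\partial B(R)$, i.e. $\lambda_{2,\alpha}=\inf\{\frac{\int|\nabla u|^2d\gamma_h+\alpha\int_{\partial B(R)}u^2e^hdA}{\int u^2d\gamma_h}: u\in W^{1,2}\setminus\{0\},\ \int uu_1d\gamma_h=0\}$ with $u_1$ a first eigenfunction. $\sigma_1(B(R);\gamma_h)=\inf\{\frac{\int_{B(R)}|\nabla u|^2d\gamma_h}{\int_{\partial B(R)}u^2e^{h}dA}: u\ne 0,\ \int_{\partial B(R)}ue^{h}dA=0\}$ is the first nonzero Steklov eigenvalue of $-\operatorname{div}(e^{h}\nabla u)=0$, $\partial u/\partial\nu=\sigma u$. *)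

theory Defs
  imports "HOL-Analysis.Analysis"
begin

text \<open>Conventions. Points of R^m are vectors of type real^'m; the dimension is CARD('m).
  B(R) = ball 0 R. Integrals are (Henstock-Kurzweil) integrals over the open ball.\<close>

text \<open>Surface integral over the sphere of radius R centred at 0, via the cone-measure
  (polar coordinates) formula: the integral of f over the sphere equals
  (m/R) times the integral over B(R) of f(R x/|x|).\<close>
definition sphere_integral :: "real \<Rightarrow> (real^'m \<Rightarrow> real) \<Rightarrow> real" where
  "sphere_integral R f =
     (real CARD('m) / R) * integral (ball 0 R) (\<lambda>x. f ((R / norm x) *\<^sub>R x))"

text \<open>Integral with respect to d gamma_h = e^{h(|x|)} dx over B(R).\<close>
definition wint :: "(real \<Rightarrow> real) \<Rightarrow> real \<Rightarrow> (real^'m \<Rightarrow> real) \<Rightarrow> real" where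
  "wint h R f = integral (ball 0 R) (\<lambda>x. f x * exp (h (norm x)))"

definition bint :: "(real \<Rightarrow> real) \<Rightarrow> real \<Rightarrow> (real^'m \<Rightarrow> real) \<Rightarrow> real" where
  "bint h R f = sphere_integral R (\<lambda>x. f x * exp (h (norm x)))"

definition C1_cball :: "real \<Rightarrow> (real^'m \<Rightarrow> real) \<Rightarrow> (real^'m \<Rightarrow> real^'m) \<Rightarrow> bool" where
  "C1_cball R u g \<longleftrightarrow> continuous_on (cball 0 R) g \<and>
     (\<forall>x\<in>cball 0 R. (u has_derivative (\<lambda>v. g x \<bullet> v)) (at x within cball 0 R))"

definition robin_quot ::
  "(real \<Rightarrow> real) \<Rightarrow> real \<Rightarrow> real \<Rightarrow> (real^'m \<Rightarrow> real) \<Rightarrow> (real^'m \<Rightarrow> real^'m) \<Rightarrow> real" where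
  "robin_quot h \<alpha> R u g =
     (wint h R (\<lambda>x. (norm (g x))\<^sup>2) + \<alpha> * bint h R (\<lambda>x. (u x)\<^sup>2)) / wint h R (\<lambda>x. (u x)\<^sup>2)"

definition first_robin_eigenfunction ::
  "(real \<Rightarrow> real) \<Rightarrow> real \<Rightarrow> real \<Rightarrow> (real^'m::finite \<Rightarrow> real) \<Rightarrow> bool" where
  "first_robin_eigenfunction h \<alpha> R u1 \<longleftrightarrow>
     (\<exists>g1. C1_cball R u1 g1 \<and> wint h R (\<lambda>x. (u1 x)\<^sup>2) > 0 \<and>
        (\<forall>(u::real^'m \<Rightarrow> real) g. C1_cball R u g \<and> wint h R (\<lambda>x. (u x)\<^sup>2) > 0 \<longrightarrow>
           robin_quot h \<alpha> R u1 g1 \<le> robin_quot h \<alpha> R u g))"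

definition lambda2_robin ::
  "(real \<Rightarrow> real) \<Rightarrow> real \<Rightarrow> real \<Rightarrow> (real^'m \<Rightarrow> real) \<Rightarrow> real" where
  "lambda2_robin h \<alpha> R u1 =
     Inf {robin_quot h \<alpha> R u g | u g. C1_cball R u g \<and> wint h R (\<lambda>x. (u x)\<^sup>2) > 0 \<and>
                                    wint h R (\<lambda>x. u x * u1 x) = 0}"

definition sigma1_steklov :: "(real \<Rightarrow> real) \<Rightarrow> real \<Rightarrow> ('m::finite) itself \<Rightarrow> real" where
  "sigma1_steklov h R _ =
     Inf {wint h R (\<lambda>x. (norm (g x))\<^sup>2) / bint h R (\<lambda>x. (u x)\<^sup>2) | u g.
            C1_cball R (u :: real^'m \<Rightarrow> real) g \<and> bint h R (\<lambda>x. (u x)\<^sup>2) > 0 \<and> bint h R u = 0}"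

end

theory Submission
  imports Defs
begin

text \<open>If some u orthogonal to the first eigenfunction u1 had negative Robin energy, then so
  would u1, which minimises the Rayleigh quotient. Minimality also forces the first variation
  to vanish: the Robin bilinear form pairs u1 with u to zero. Hence a nontrivial combination
  v = a u + b u1 with vanishing weighted boundary mean has energy a^2 E(u) + b^2 E(u1) < 0.
  But for such v the definition of sigma_1 gives
  E(v) \<ge> \<integral>|\<nabla>v|^2 - sigma_1 \<integral>_\<partial> v^2 \<ge> 0, because alpha \<ge> -sigma_1.\<close>

lemma integrable_on_if_continuous_bounded_off_point:
  fixes F :: "'a::euclidean_space \<Rightarrow> real"
  assumes S: "S \<in> lmeasurable"
    and cont: "continuous_on (S - {a}) F" and bdd: "bounded (F ` (S - {a}))"
  shows "F integrable_on S"
proof -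
  obtain B where B: "\<And>x. x \<in> S - {a} \<Longrightarrow> \<bar>F x\<bar> \<le> B"
    using bdd unfolding bounded_real by blast
  have Sa: "S - {a} \<in> lmeasurable"
    using S by (intro fmeasurable_Diff) auto
  then have Sa_leb: "S - {a} \<in> sets lebesgue"
    by (simp add: fmeasurable_def)
  have "F integrable_on S - {a}"
    using measurable_bounded_by_integrable_imp_integrable_real[where g = "\<lambda>_. B",
        OF continuous_imp_measurable_on_sets_lebesgue[OF cont Sa_leb] integrable_on_const[OF Sa]]
      B Sa_leb by blast
  then show ?thesis
    by (rule integrable_spike_set) (auto intro: negligible_subset[of "{a}"])
qed

lemma continuous_on_cball_imp_integrable_on_ball:
  fixes F :: "'a::euclidean_space \<Rightarrow> real"
  assumes "continuous_on (cball c R) F"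
  shows "F integrable_on ball c R"
proof (rule integrable_on_if_continuous_bounded_off_point)
  show "continuous_on (ball c R - {c}) F"
    using assms by (rule continuous_on_subset) auto
  have "bounded (F ` cball c R)"
    using assms by (intro compact_imp_bounded compact_continuous_image) auto
  then show "bounded (F ` (ball c R - {c}))"
    by (rule bounded_subset) auto
qed simp

lemma integrable_on_ball_radial_projection:
  fixes F :: "'a::euclidean_space \<Rightarrow> real"
  assumes "continuous_on (sphere 0 R) F" "R > 0"
  shows "(\<lambda>x. F ((R / norm x) *\<^sub>R x)) integrable_on ball 0 R"
proof (rule integrable_on_if_continuous_bounded_off_point)
  have proj: "(\<lambda>x. (R / norm x) *\<^sub>R x) ` (ball 0 R - {0}) \<subseteq> sphere 0 R"
    using assms(2) by (auto split: if_split_asm)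
  show "continuous_on (ball 0 R - {0}) (\<lambda>x. F ((R / norm x) *\<^sub>R x))"
    by (rule continuous_on_compose2[OF assms(1) _ proj]) (intro continuous_intros, auto)
  have "bounded (F ` sphere 0 R)"
    using assms(1) by (intro compact_imp_bounded compact_continuous_image) auto
  then show "bounded ((\<lambda>x. F ((R / norm x) *\<^sub>R x)) ` (ball 0 R - {0}))"
    by (rule bounded_subset) (use proj in auto)
qed simp

lemma integral_nonneg_if_nonneg:
  fixes f :: "'a::euclidean_space \<Rightarrow> real"
  shows "(\<And>x. x \<in> S \<Longrightarrow> 0 \<le> f x) \<Longrightarrow> 0 \<le> integral S f"
  by (metis integral_nonneg not_integrable_integral order_refl)

lemma integral_ball_pos_if_continuous_nonneg:
  fixes F :: "'a::euclidean_space \<Rightarrow> real"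
  assumes R: "R > 0" and cont: "continuous_on (cball c R) F"
    and nonneg: "\<And>x. x \<in> cball c R \<Longrightarrow> 0 \<le> F x"
    and x0: "x0 \<in> ball c R" "F x0 \<noteq> 0"
  shows "integral (ball c R) F > 0"
proof -
  have int: "F integrable_on ball c R"
    by (rule continuous_on_cball_imp_integrable_on_ball[OF cont])
  have "negligible (cball c R - ball c R)"
    by (simp add: cball_diff_eq_sphere negligible_sphere)
  then have "(F has_integral integral (ball c R) F) (cball c R) \<longleftrightarrow>
      (F has_integral integral (ball c R) F) (ball c R)"
    by (intro has_integral_spike_set_eq) (auto intro: negligible_subset)
  then have on_cball: "(F has_integral integral (ball c R) F) (cball c R)"
    using int by (simp add: has_integral_integral)
  have "integral (ball c R) F \<noteq> 0"
  proof
    assume "integral (ball c R) F = 0"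
    then have "(F has_integral 0) (closure (ball c R))"
      using on_cball R by simp
    then have "F x0 = 0"
      using R cont nonneg x0(1) closure_subset[of "ball c R"]
      by (intro has_integral_0_closure_imp_0[of "ball c R" F])
        (auto simp: emeasure_ball emeasure_cball emeasure_lborel_ball_finite)
    with x0(2) show False ..
  qed
  moreover have "integral (ball c R) F \<ge> 0"
    using nonneg by (intro integral_nonneg_if_nonneg) auto
  ultimately show ?thesis
    by linarith
qed

lemma integral_linear_combination3:
  fixes F G H :: "'a::euclidean_space \<Rightarrow> real"
  assumes "F integrable_on S" "G integrable_on S" "H integrable_on S"
  shows "integral S (\<lambda>x. a * F x + b * G x + c * H x) =
    a * integral S F + b * integral S G + c * integral S H"
  using assms by (simp add: integral_add integrable_add integrable_on_mult_right)

lemma sphere_integral_linear_combination3: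
  fixes F G H :: "real^'m \<Rightarrow> real"
  assumes "R > 0"
    and "continuous_on (sphere 0 R) F" "continuous_on (sphere 0 R) G" "continuous_on (sphere 0 R) H"
  shows "sphere_integral R (\<lambda>x. a * F x + b * G x + c * H x) =
    a * sphere_integral R F + b * sphere_integral R G + c * sphere_integral R H"
  unfolding sphere_integral_def
  using integral_linear_combination3[OF integrable_on_ball_radial_projection[OF assms(2,1)]
      integrable_on_ball_radial_projection[OF assms(3,1)]
      integrable_on_ball_radial_projection[OF assms(4,1)], of a b c]
  by (simp add: algebra_simps)

lemma linear_coeff_eq_0_if_quadratic_nonneg:
  fixes c d :: real
  assumes "\<And>t. 0 \<le> t\<^sup>2 * d + 2 * t * c"
  shows "c = 0"
proof (rule ccontr)
  assume "c \<noteq> 0"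
  define D where "D = \<bar>d\<bar> + 1"
  have "D > 0" "d - 2 * D < 0"
    unfolding D_def by auto
  have "(- c / D)\<^sup>2 * d + 2 * (- c / D) * c = c\<^sup>2 * (d - 2 * D) / D\<^sup>2"
    using \<open>D > 0\<close> by (simp add: field_simps power2_eq_square)
  also have "\<dots> < 0"
    using \<open>c \<noteq> 0\<close> \<open>D > 0\<close> \<open>d - 2 * D < 0\<close> by (simp add: divide_neg_pos mult_pos_neg)
  finally show False
    using assms[of "- c / D"] by simp
qed

lemma exists_nontrivial_linear_relation:
  fixes p q :: real
  obtains a b where "a \<noteq> 0 \<or> b \<noteq> 0" "a * p + b * q = 0"
proof (cases "p = 0 \<and> q = 0")
  case True
  then show ?thesis
    using that[of 1 0] by simp
next
  case False
  then show ?thesis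
    using that[of q "- p"] by (auto simp: mult.commute)
qed

lemma C1_cball_imp_continuous_on:
  "C1_cball R u g \<Longrightarrow> continuous_on (cball 0 R) u"
  unfolding C1_cball_def
  by (meson continuous_on_eq_continuous_within has_derivative_continuous)

lemma C1_cball_linear_combination:
  assumes "C1_cball R u g" "C1_cball R w k"
  shows "C1_cball R (\<lambda>x. a * u x + b * w x) (\<lambda>x. a *\<^sub>R g x + b *\<^sub>R k x)"
  unfolding C1_cball_def
proof safe
  show "continuous_on (cball 0 R) (\<lambda>x. a *\<^sub>R g x + b *\<^sub>R k x)"
    using assms unfolding C1_cball_def by (intro continuous_intros) auto
  fix x :: "real^'a"
  assume "x \<in> cball 0 R"
  then have "((\<lambda>x. a * u x + b * w x) has_derivative (\<lambda>v. a * (g x \<bullet> v) + b * (k x \<bullet> v)))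
      (at x within cball 0 R)"
    using assms unfolding C1_cball_def by (auto intro!: derivative_eq_intros)
  then show "((\<lambda>x. a * u x + b * w x) has_derivative (\<lambda>v. (a *\<^sub>R g x + b *\<^sub>R k x) \<bullet> v))
      (at x within cball 0 R)"
    by (simp add: inner_add_left)
qed

lemma C1_cball_const: "C1_cball R (\<lambda>x. c) (\<lambda>x. 0)"
  unfolding C1_cball_def by (auto intro!: derivative_eq_intros)

lemma C1_cball_component: "C1_cball R (\<lambda>x. x $ i) (\<lambda>x. axis i 1)"
proof -
  have "(\<lambda>v. axis i 1 \<bullet> v) = (\<lambda>v::real^'a. v $ i)"
    by (simp add: fun_eq_iff inner_axis')
  then show ?thesis
    unfolding C1_cball_def by (simp add: bounded_linear_imp_has_derivative bounded_linear_vec_nth)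
qed

lemma wint_nonneg: "(\<And>x. 0 \<le> f x) \<Longrightarrow> 0 \<le> wint h R f"
  unfolding wint_def by (simp add: integral_nonneg_if_nonneg)

lemma bint_nonneg: "0 \<le> R \<Longrightarrow> (\<And>x. 0 \<le> f x) \<Longrightarrow> 0 \<le> bint h R f"
  unfolding bint_def sphere_integral_def by (simp add: integral_nonneg_if_nonneg)

definition robin_energy ::
  "(real \<Rightarrow> real) \<Rightarrow> real \<Rightarrow> real \<Rightarrow> (real^'m \<Rightarrow> real) \<Rightarrow> (real^'m \<Rightarrow> real^'m) \<Rightarrow> real" where
  "robin_energy h \<alpha> R u g = wint h R (\<lambda>x. (norm (g x))\<^sup>2) + \<alpha> * bint h R (\<lambda>x. (u x)\<^sup>2)"

definition robin_form :: "(real \<Rightarrow> real) \<Rightarrow> real \<Rightarrow> real \<Rightarrow> (real^'m \<Rightarrow> real) \<Rightarrow>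
    (real^'m \<Rightarrow> real^'m) \<Rightarrow> (real^'m \<Rightarrow> real) \<Rightarrow> (real^'m \<Rightarrow> real^'m) \<Rightarrow> real" where
  "robin_form h \<alpha> R u g w k = wint h R (\<lambda>x. g x \<bullet> k x) + \<alpha> * bint h R (\<lambda>x. u x * w x)"

definition robin_minimiser ::
  "(real \<Rightarrow> real) \<Rightarrow> real \<Rightarrow> real \<Rightarrow> (real^'m \<Rightarrow> real) \<Rightarrow> (real^'m \<Rightarrow> real^'m) \<Rightarrow> bool" where
  "robin_minimiser h \<alpha> R u1 g1 \<longleftrightarrow> C1_cball R u1 g1 \<and> wint h R (\<lambda>x. (u1 x)\<^sup>2) > 0 \<and>
     (\<forall>(u::real^'m \<Rightarrow> real) g. C1_cball R u g \<and> wint h R (\<lambda>x. (u x)\<^sup>2) > 0 \<longrightarrow>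
        robin_quot h \<alpha> R u1 g1 \<le> robin_quot h \<alpha> R u g)"

lemma first_robin_eigenfunction_iff:
  "first_robin_eigenfunction h \<alpha> R u1 \<longleftrightarrow> (\<exists>g1. robin_minimiser h \<alpha> R u1 g1)"
  unfolding first_robin_eigenfunction_def robin_minimiser_def ..

lemma robin_quot_eq: "robin_quot h \<alpha> R u g = robin_energy h \<alpha> R u g / wint h R (\<lambda>x. (u x)\<^sup>2)"
  unfolding robin_quot_def robin_energy_def ..

lemma robin_form_commute: "robin_form h \<alpha> R u g w k = robin_form h \<alpha> R w k u g"
  unfolding robin_form_def by (simp add: inner_commute mult.commute)

lemma sigma1_steklov_le:
  fixes v :: "real^'m \<Rightarrow> real"
  assumes "C1_cball R v k" "bint h R (\<lambda>x. (v x)\<^sup>2) > 0" "bint h R v = 0"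
  shows "sigma1_steklov h R TYPE('m) \<le> wint h R (\<lambda>x. (norm (k x))\<^sup>2) / bint h R (\<lambda>x. (v x)\<^sup>2)"
  unfolding sigma1_steklov_def
proof (rule cInf_lower)
  show "wint h R (\<lambda>x. (norm (k x))\<^sup>2) / bint h R (\<lambda>x. (v x)\<^sup>2) \<in> {wint h R (\<lambda>x. (norm (g x))\<^sup>2) /
      bint h R (\<lambda>x. (u x)\<^sup>2) | u g. C1_cball R (u :: real^'m \<Rightarrow> real) g \<and>
      bint h R (\<lambda>x. (u x)\<^sup>2) > 0 \<and> bint h R u = 0}"
    using assms by blast
  show "bdd_below {wint h R (\<lambda>x. (norm (g x))\<^sup>2) / bint h R (\<lambda>x. (u x)\<^sup>2) | u g.
      C1_cball R (u :: real^'m \<Rightarrow> real) g \<and> bint h R (\<lambda>x. (u x)\<^sup>2) > 0 \<and> bint h R u = 0}"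
    by (rule bdd_belowI[of _ 0]) (auto intro!: divide_nonneg_pos wint_nonneg)
qed

lemma robin_energy_nonneg_if_bint_eq_0:
  fixes v :: "real^'m \<Rightarrow> real"
  assumes "0 \<le> R" "\<alpha> \<ge> - sigma1_steklov h R TYPE('m)" "C1_cball R v k" "bint h R v = 0"
  shows "0 \<le> robin_energy h \<alpha> R v k"
proof (cases "bint h R (\<lambda>x. (v x)\<^sup>2) = 0")
  case True
  then show ?thesis
    unfolding robin_energy_def by (simp add: wint_nonneg)
next
  case False
  then have pos: "bint h R (\<lambda>x. (v x)\<^sup>2) > 0"
    using bint_nonneg[OF \<open>0 \<le> R\<close>] by (metis less_eq_real_def zero_le_power2)
  have "- \<alpha> \<le> wint h R (\<lambda>x. (norm (k x))\<^sup>2) / bint h R (\<lambda>x. (v x)\<^sup>2)"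
    using sigma1_steklov_le[OF assms(3) pos assms(4)] assms(2) by linarith
  then show ?thesis
    using pos unfolding robin_energy_def by (simp add: field_simps)
qed

context
  fixes h :: "real \<Rightarrow> real" and R :: real
  assumes h_cont: "continuous_on {0..} h" and R_pos: "R > 0"
begin

lemma continuous_on_weighted:
  fixes f :: "'a::real_normed_vector \<Rightarrow> real"
  assumes "continuous_on S f"
  shows "continuous_on S (\<lambda>x. f x * exp (h (norm x)))"
proof -
  have "continuous_on S (\<lambda>x. h (norm x))"
    by (rule continuous_on_compose2[OF h_cont]) (intro continuous_intros, auto)
  then show ?thesis
    using assms by (intro continuous_intros)
qed

lemma wint_linear_combination3:
  fixes f1 f2 f3 :: "real^'m \<Rightarrow> real"
  assumes "continuous_on (cball 0 R) f1" "continuous_on (cball 0 R) f2"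
    "continuous_on (cball 0 R) f3"
  shows "wint h R (\<lambda>x. a * f1 x + b * f2 x + c * f3 x) =
    a * wint h R f1 + b * wint h R f2 + c * wint h R f3"
  unfolding wint_def
  using integral_linear_combination3[OF
      continuous_on_cball_imp_integrable_on_ball[OF continuous_on_weighted[OF assms(1)]]
      continuous_on_cball_imp_integrable_on_ball[OF continuous_on_weighted[OF assms(2)]]
      continuous_on_cball_imp_integrable_on_ball[OF continuous_on_weighted[OF assms(3)]], of a b c]
  by (simp add: algebra_simps)

lemma wint_linear_combination2:
  fixes f1 f2 :: "real^'m \<Rightarrow> real"
  assumes "continuous_on (cball 0 R) f1" "continuous_on (cball 0 R) f2"
  shows "wint h R (\<lambda>x. a * f1 x + b * f2 x) = a * wint h R f1 + b * wint h R f2"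
  using wint_linear_combination3[OF assms continuous_on_const, of a b 0 0] by simp

lemma bint_linear_combination3:
  fixes f1 f2 f3 :: "real^'m \<Rightarrow> real"
  assumes "continuous_on (sphere 0 R) f1" "continuous_on (sphere 0 R) f2"
    "continuous_on (sphere 0 R) f3"
  shows "bint h R (\<lambda>x. a * f1 x + b * f2 x + c * f3 x) =
    a * bint h R f1 + b * bint h R f2 + c * bint h R f3"
  unfolding bint_def
  using sphere_integral_linear_combination3[OF R_pos continuous_on_weighted[OF assms(1)]
      continuous_on_weighted[OF assms(2)] continuous_on_weighted[OF assms(3)], of a b c]
  by (simp add: algebra_simps)

lemma bint_linear_combination2:
  fixes f1 f2 :: "real^'m \<Rightarrow> real"
  assumes "continuous_on (sphere 0 R) f1" "continuous_on (sphere 0 R) f2"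
  shows "bint h R (\<lambda>x. a * f1 x + b * f2 x) = a * bint h R f1 + b * bint h R f2"
  using bint_linear_combination3[OF assms continuous_on_const, of a b 0 0] by simp

lemma wint_square_linear_combination:
  fixes u w :: "real^'m \<Rightarrow> real"
  assumes "continuous_on (cball 0 R) u" "continuous_on (cball 0 R) w"
  shows "wint h R (\<lambda>x. (a * u x + b * w x)\<^sup>2) =
    a\<^sup>2 * wint h R (\<lambda>x. (u x)\<^sup>2) + b\<^sup>2 * wint h R (\<lambda>x. (w x)\<^sup>2) + 2 * a * b * wint h R (\<lambda>x. u x * w x)"
proof -
  have "wint h R (\<lambda>x. (a * u x + b * w x)\<^sup>2) =
      wint h R (\<lambda>x. a\<^sup>2 * (u x)\<^sup>2 + b\<^sup>2 * (w x)\<^sup>2 + (2 * a * b) * (u x * w x))"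
    by (simp add: power2_eq_square algebra_simps)
  also have "\<dots> = a\<^sup>2 * wint h R (\<lambda>x. (u x)\<^sup>2) + b\<^sup>2 * wint h R (\<lambda>x. (w x)\<^sup>2) +
      2 * a * b * wint h R (\<lambda>x. u x * w x)"
    by (intro wint_linear_combination3 continuous_intros assms)
  finally show ?thesis .
qed

lemma robin_energy_linear_combination:
  assumes "C1_cball R u g" "C1_cball R w k"
  shows "robin_energy h \<alpha> R (\<lambda>x. a * u x + b * w x) (\<lambda>x. a *\<^sub>R g x + b *\<^sub>R k x) =
    a\<^sup>2 * robin_energy h \<alpha> R u g + b\<^sup>2 * robin_energy h \<alpha> R w k + 2 * a * b * robin_form h \<alpha> R u g w k"
proof -
  have cont: "continuous_on (cball 0 R) u" "continuous_on (cball 0 R) w"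
      "continuous_on (cball 0 R) g" "continuous_on (cball 0 R) k"
    using C1_cball_imp_continuous_on[OF assms(1)] C1_cball_imp_continuous_on[OF assms(2)] assms
    unfolding C1_cball_def by simp_all
  then have cont_sphere: "continuous_on (sphere 0 R) u" "continuous_on (sphere 0 R) w"
    by (meson continuous_on_subset sphere_cball)+
  have norm_expand: "(norm (a *\<^sub>R g x + b *\<^sub>R k x))\<^sup>2 =
      a\<^sup>2 * (norm (g x))\<^sup>2 + b\<^sup>2 * (norm (k x))\<^sup>2 + (2 * a * b) * (g x \<bullet> k x)" for x
    unfolding power2_norm_eq_inner
    by (simp add: inner_add_left inner_add_right inner_commute[of "k x" "g x"] algebra_simps power2_eq_square)
  have "wint h R (\<lambda>x. (norm (a *\<^sub>R g x + b *\<^sub>R k x))\<^sup>2) =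
      a\<^sup>2 * wint h R (\<lambda>x. (norm (g x))\<^sup>2) + b\<^sup>2 * wint h R (\<lambda>x. (norm (k x))\<^sup>2) +
      2 * a * b * wint h R (\<lambda>x. g x \<bullet> k x)"
    unfolding norm_expand by (intro wint_linear_combination3 continuous_intros cont)
  moreover have "bint h R (\<lambda>x. (a * u x + b * w x)\<^sup>2) =
      bint h R (\<lambda>x. a\<^sup>2 * (u x)\<^sup>2 + b\<^sup>2 * (w x)\<^sup>2 + (2 * a * b) * (u x * w x))"
    by (simp add: power2_eq_square algebra_simps)
  moreover have "\<dots> = a\<^sup>2 * bint h R (\<lambda>x. (u x)\<^sup>2) + b\<^sup>2 * bint h R (\<lambda>x. (w x)\<^sup>2) +
      2 * a * b * bint h R (\<lambda>x. u x * w x)"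
    by (intro bint_linear_combination3 continuous_intros cont_sphere)
  ultimately show ?thesis
    unfolding robin_energy_def robin_form_def by (simp add: algebra_simps)
qed

lemma robin_form_eq_0_if_orthogonal_to_minimiser:
  fixes u :: "real^'m \<Rightarrow> real"
  assumes min: "robin_minimiser h \<alpha> R u1 g1" and u: "C1_cball R u g"
    and orth: "wint h R (\<lambda>x. u x * u1 x) = 0"
  shows "robin_form h \<alpha> R u1 g1 u g = 0"
proof -
  from min have u1: "C1_cball R u1 g1" and W1_pos: "wint h R (\<lambda>x. (u1 x)\<^sup>2) > 0"
    and minimal: "\<And>(v::real^'m \<Rightarrow> real) k. C1_cball R v k \<Longrightarrow> wint h R (\<lambda>x. (v x)\<^sup>2) > 0 \<Longrightarrow>
      robin_quot h \<alpha> R u1 g1 \<le> robin_quot h \<alpha> R v k"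
    unfolding robin_minimiser_def by auto
  define W1 where "W1 = wint h R (\<lambda>x. (u1 x)\<^sup>2)"
  define Wu where "Wu = wint h R (\<lambda>x. (u x)\<^sup>2)"
  define E1 where "E1 = robin_energy h \<alpha> R u1 g1"
  define Eu where "Eu = robin_energy h \<alpha> R u g"
  define F where "F = robin_form h \<alpha> R u1 g1 u g"
  have "W1 > 0" "Wu \<ge> 0"
    using W1_pos by (simp_all add: W1_def Wu_def wint_nonneg)
  have W_t: "wint h R (\<lambda>x. (1 * u1 x + t * u x)\<^sup>2) = W1 + t\<^sup>2 * Wu" for t
    using wint_square_linear_combination[OF C1_cball_imp_continuous_on[OF u1]
        C1_cball_imp_continuous_on[OF u], of 1 t] orth
    by (simp add: W1_def Wu_def mult.commute)
  have E_t: "robin_energy h \<alpha> R (\<lambda>x. 1 * u1 x + t * u x) (\<lambda>x. 1 *\<^sub>R g1 x + t *\<^sub>R g x) =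
      E1 + t\<^sup>2 * Eu + 2 * t * F" for t
    using robin_energy_linear_combination[OF u1 u, where a = 1 and b = t]
    by (simp add: E1_def Eu_def F_def)
  have "0 \<le> t\<^sup>2 * (W1 * Eu - E1 * Wu) + 2 * t * (W1 * F)" for t
  proof -
    have W_t_pos: "W1 + t\<^sup>2 * Wu > 0"
      using \<open>W1 > 0\<close> \<open>Wu \<ge> 0\<close> by (simp add: add_pos_nonneg)
    have "E1 / W1 \<le> (E1 + t\<^sup>2 * Eu + 2 * t * F) / (W1 + t\<^sup>2 * Wu)"
      using minimal[OF C1_cball_linear_combination[OF u1 u, of 1 t]] W_t_pos
      unfolding robin_quot_eq W_t E_t by (simp add: E1_def W1_def)
    then have "E1 * (W1 + t\<^sup>2 * Wu) \<le> (E1 + t\<^sup>2 * Eu + 2 * t * F) * W1"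
      using \<open>W1 > 0\<close> W_t_pos by (simp add: divide_le_eq le_divide_eq mult.commute)
    then show ?thesis
      by (simp add: algebra_simps)
  qed
  then have "W1 * F = 0"
    by (rule linear_coeff_eq_0_if_quadratic_nonneg)
  then show ?thesis
    using \<open>W1 > 0\<close> by (simp add: F_def)
qed

lemma robin_energy_nonneg_if_orthogonal_to_minimiser:
  fixes u :: "real^'m \<Rightarrow> real"
  assumes \<alpha>: "\<alpha> \<ge> - sigma1_steklov h R TYPE('m)" and min: "robin_minimiser h \<alpha> R u1 g1"
    and u: "C1_cball R u g" "wint h R (\<lambda>x. (u x)\<^sup>2) > 0" "wint h R (\<lambda>x. u x * u1 x) = 0"
  shows "0 \<le> robin_energy h \<alpha> R u g"
proof (rule ccontr)
  assume "\<not> ?thesis"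
  then have Eu: "robin_energy h \<alpha> R u g < 0"
    by simp
  from min have u1: "C1_cball R u1 g1" and W1_pos: "wint h R (\<lambda>x. (u1 x)\<^sup>2) > 0"
    and "robin_quot h \<alpha> R u1 g1 \<le> robin_quot h \<alpha> R u g"
    using u unfolding robin_minimiser_def by auto
  then have "robin_energy h \<alpha> R u1 g1 / wint h R (\<lambda>x. (u1 x)\<^sup>2) < 0"
    using Eu u(2) divide_neg_pos unfolding robin_quot_eq by (metis order.strict_trans1)
  then have E1: "robin_energy h \<alpha> R u1 g1 < 0"
    using W1_pos by (simp add: divide_less_0_iff)
  obtain a b where ab: "a \<noteq> 0 \<or> b \<noteq> 0" and rel: "a * bint h R u + b * bint h R u1 = 0"
    by (rule exists_nontrivial_linear_relation)
  have "bint h R (\<lambda>x. a * u x + b * u1 x) = 0"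
    using rel continuous_on_subset[OF C1_cball_imp_continuous_on[OF u(1)] sphere_cball]
      continuous_on_subset[OF C1_cball_imp_continuous_on[OF u1] sphere_cball]
    by (simp add: bint_linear_combination2)
  then have "0 \<le> robin_energy h \<alpha> R (\<lambda>x. a * u x + b * u1 x) (\<lambda>x. a *\<^sub>R g x + b *\<^sub>R g1 x)"
    using R_pos \<alpha> C1_cball_linear_combination[OF u(1) u1]
    by (intro robin_energy_nonneg_if_bint_eq_0) auto
  also have "\<dots> = a\<^sup>2 * robin_energy h \<alpha> R u g + b\<^sup>2 * robin_energy h \<alpha> R u1 g1"
    using robin_energy_linear_combination[OF u(1) u1, where a = a and b = b]
      robin_form_eq_0_if_orthogonal_to_minimiser[OF min u(1) u(3)]
    by (simp add: robin_form_commute[of h \<alpha> R u g])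
  also have "\<dots> < 0"
  proof -
    have "a\<^sup>2 * robin_energy h \<alpha> R u g \<le> 0" "b\<^sup>2 * robin_energy h \<alpha> R u1 g1 \<le> 0"
      using Eu E1 by (simp_all add: mult_nonneg_nonpos)
    moreover have "a\<^sup>2 * robin_energy h \<alpha> R u g < 0 \<or> b\<^sup>2 * robin_energy h \<alpha> R u1 g1 < 0"
      using ab Eu E1 by (auto simp: mult_pos_neg)
    ultimately show ?thesis
      by linarith
  qed
  finally show False
    by simp
qed

lemma exists_orthogonal_test_function:
  fixes u1 :: "real^'m \<Rightarrow> real"
  assumes "continuous_on (cball 0 R) u1"
  obtains u g where "C1_cball R u g" "wint h R (\<lambda>x. (u x)\<^sup>2) > 0" "wint h R (\<lambda>x. u x * u1 x) = 0"
proof -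
  fix i :: 'm
  obtain p q where pq: "p \<noteq> 0 \<or> q \<noteq> 0"
    and rel: "p * wint h R u1 + q * wint h R (\<lambda>x. x $ i * u1 x) = 0"
    by (rule exists_nontrivial_linear_relation)
  define u where "u x = p * 1 + q * x $ i" for x :: "real^'m"
  have C1: "C1_cball R u (\<lambda>x. p *\<^sub>R 0 + q *\<^sub>R axis i 1)"
    unfolding u_def by (rule C1_cball_linear_combination[OF C1_cball_const C1_cball_component])
  have "wint h R (\<lambda>x. u x * u1 x) = wint h R (\<lambda>x. p * u1 x + q * (x $ i * u1 x))"
    unfolding u_def by (simp add: algebra_simps)
  also have "\<dots> = 0"
    using rel wint_linear_combination2[OF assms, of "\<lambda>x. x $ i * u1 x"]
    by (simp add: continuous_on_mult continuous_on_component assms)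
  finally have orth: "wint h R (\<lambda>x. u x * u1 x) = 0" .
  define x0 :: "real^'m" where "x0 = (if p \<noteq> 0 then 0 else (R / 2) *\<^sub>R axis i 1)"
  have "x0 \<in> ball 0 R" "u x0 \<noteq> 0"
    using pq R_pos by (auto simp: x0_def u_def)
  then have "integral (ball 0 R) (\<lambda>x. (u x)\<^sup>2 * exp (h (norm x))) > 0"
    using R_pos unfolding u_def
    by (intro integral_ball_pos_if_continuous_nonneg continuous_on_weighted continuous_intros) auto
  then show thesis
    using that C1 orth unfolding wint_def by blast
qed

end

theorem proposition2p4:
  fixes h :: "real \<Rightarrow> real" and R \<alpha> :: real and u1 :: "real^'m \<Rightarrow> real"
  assumes "CARD('m) \<ge> 2"
    and "R > 0"
    and "\<exists>h' h''. (\<forall>r\<ge>0. (h has_real_derivative h' r) (at r within {0..}) \<and>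
                          (h' has_real_derivative h'' r) (at r within {0..}) \<and> h' r \<ge> 0)
                 \<and> continuous_on {0..} h''"
    and "\<alpha> \<ge> - sigma1_steklov h R TYPE('m)"
    and "first_robin_eigenfunction h \<alpha> R u1"
  shows "lambda2_robin h \<alpha> R u1 \<ge> 0"
proof -
  have h_cont: "continuous_on {0..} h"
    using assms(3) unfolding continuous_on_eq_continuous_within by (metis DERIV_continuous atLeast_iff)
  obtain g1 where min: "robin_minimiser h \<alpha> R u1 g1"
    using assms(5) first_robin_eigenfunction_iff by blast
  then have "continuous_on (cball 0 R) u1"
    unfolding robin_minimiser_def by (blast intro: C1_cball_imp_continuous_on)
  then obtain u g where "C1_cball R u g" "wint h R (\<lambda>x. (u x)\<^sup>2) > 0" "wint h R (\<lambda>x. u x * u1 x) = 0"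
    by (rule exists_orthogonal_test_function[OF h_cont assms(2)])
  then show ?thesis
    unfolding lambda2_robin_def
  proof (intro cInf_greatest)
    fix y
    assume "y \<in> {robin_quot h \<alpha> R u g | u g. C1_cball R u g \<and> wint h R (\<lambda>x. (u x)\<^sup>2) > 0 \<and>
        wint h R (\<lambda>x. u x * u1 x) = 0}"
    then obtain u g where y: "y = robin_quot h \<alpha> R u g" and u: "C1_cball R u g"
      "wint h R (\<lambda>x. (u x)\<^sup>2) > 0" "wint h R (\<lambda>x. u x * u1 x) = 0"
      by blast
    show "0 \<le> y"
      unfolding y robin_quot_eq
      using robin_energy_nonneg_if_orthogonal_to_minimiser[OF h_cont assms(2,4) min u] u(2)
      by simp
  qed blast
qed

end
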